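(* For a Dyck path $D$ of length $2(n+1)$, let $(a_1,b_1),\dots,(a_k,b_k)$ be the peaks of $D$ of height at least $2$, listed from left to right, and set $p_i=(a_i+b_i-2)/2$, $r_i=b_i-1$. Define $\Phi(D)$ to be the word $R_1R_2\cdots R_k$ with $R_i=x_{p_i}x_{p_i-1}\cdots x_{p_i-r_i+1}$ (and $\Phi(D)=1$ if $k=0$). Then $\Phi$ is a bijection from the set of Dyck paths of length $2(n+1)$ to the set of nTL-monomials for $P_n$; moreover the decreasing runs of $\Phi(D)$ are exactly $R_1,\dots,R_k$.
   Context: Fix $n\ge 0$. The nil-Temperley-Lieb algebra $A_n$ of the path graph $P_n$ is the unital associative algebra generated by $x_1,\dots,x_n$ subject to the relations $x_i^2=0$; $x_ix_j=x_jx_i$ if $|i-j|>1$; $x_ix_{i+1}x_i=0$ and $x_{i+1}x_ix_{i+1}=0$ for $1\le i<n$. A word is a finite product of generators. Two words are equivalent if one can be obtained from the other by repeatedly swapping adjacent letters $x_ix_j\to x_jx_i$ with $|i-j|>1$. A word is reducible if it equals $0$ in $A_n$. Words of the same length are compared lexicographically by index sequences. An nTL-monomial is a word that is not reducible and lexicographically smallest among all words equivalent to it. A decreasing run is a maximal block of consecutive letters with strictly decreasing indices. A Dyck path of length $2m$ is a lattice path from $(0,0)$ to $(2m,0)$ with steps $(1,1)$ (up) and $(1,-1)$ (down) that never goes below the $x$-axis. A peak of a Dyck path is a point $(a,b)$ on it reached by an up step and followed by a down step; $b$ is its height. *)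

theory Defs
  imports Main "HOL-Library.Poly_Mapping"
begin

text \<open>A word is a list of generator indices; the word [i1,...,im] stands for x_i1 ... x_im.
  Words over the generators of A_n have all letters in {1..n}.\<close>

definition is_word :: "nat \<Rightarrow> nat list \<Rightarrow> bool" where
  "is_word n w \<longleftrightarrow> set w \<subseteq> {1..n}"

definition zero_rel :: "nat \<Rightarrow> nat list \<Rightarrow> bool" where
  "zero_rel n m \<longleftrightarrow>
     (\<exists>i. 1 \<le> i \<and> i \<le> n \<and> m = [i, i]) \<or>
     (\<exists>i. 1 \<le> i \<and> i < n \<and> (m = [i, Suc i, i] \<or> m = [Suc i, i, Suc i]))"

definition comm_rel :: "nat \<Rightarrow> nat list \<Rightarrow> nat list \<Rightarrow> bool" where
  "comm_rel n a b \<longleftrightarrow>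
     (\<exists>i j. 1 \<le> i \<and> i \<le> n \<and> 1 \<le> j \<and> j \<le> n \<and> (i + 1 < j \<or> j + 1 < i)
            \<and> a = [i, j] \<and> b = [j, i])"

text \<open>The free associative algebra over a field 'k on x_1..x_n is modelled by finitely
  supported functions from words to 'k. The two-sided ideal generated by the defining
  relations is the set of finite linear combinations of u * r * v with u, v words and
  r a defining relation.\<close>
inductive in_nTL_ideal :: "nat \<Rightarrow> (nat list \<Rightarrow>\<^sub>0 'k::field) \<Rightarrow> bool" for n where
  zero: "in_nTL_ideal n 0"
| mono: "in_nTL_ideal n f \<Longrightarrow> zero_rel n m \<Longrightarrow> is_word n u \<Longrightarrow> is_word n v \<Longrightarrow>
           in_nTL_ideal n (f + Poly_Mapping.single (u @ m @ v) c)"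
| comm: "in_nTL_ideal n f \<Longrightarrow> comm_rel n a b \<Longrightarrow> is_word n u \<Longrightarrow> is_word n v \<Longrightarrow>
           in_nTL_ideal n (f + (Poly_Mapping.single (u @ a @ v) c - Poly_Mapping.single (u @ b @ v) c))"

text \<open>A word is reducible if it equals 0 in A_n (over the field 'k).\<close>
definition reducible :: "'k::field itself \<Rightarrow> nat \<Rightarrow> nat list \<Rightarrow> bool" where
  "reducible K n w \<longleftrightarrow> in_nTL_ideal n (Poly_Mapping.single w (1::'k))"

definition swap_step :: "nat list \<Rightarrow> nat list \<Rightarrow> bool" where
  "swap_step w w' \<longleftrightarrow>
     (\<exists>u v i j. (i + 1 < j \<or> j + 1 < i) \<and> w = u @ [i, j] @ v \<and> w' = u @ [j, i] @ v)"

definition word_equiv :: "nat list \<Rightarrow> nat list \<Rightarrow> bool" where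
  "word_equiv w w' \<longleftrightarrow> swap_step\<^sup>*\<^sup>* w w'"

text \<open>Lexicographic comparison of index sequences (used only for words of equal length).\<close>
definition lex_less :: "nat list \<Rightarrow> nat list \<Rightarrow> bool" where
  "lex_less u w \<longleftrightarrow> (u, w) \<in> lexord {(a, b). a < b}"

definition nTL_monomial :: "'k::field itself \<Rightarrow> nat \<Rightarrow> nat list \<Rightarrow> bool" where
  "nTL_monomial K n w \<longleftrightarrow>
     is_word n w \<and> \<not> reducible K n w \<and>
     (\<forall>w'. word_equiv w w' \<longrightarrow> w' = w \<or> lex_less w w')"

definition decreasing_runs :: "nat list \<Rightarrow> nat list list \<Rightarrow> bool" where
  "decreasing_runs w rs \<longleftrightarrow>
     concat rs = w \<and>
     (\<forall>r\<in>set rs. r \<noteq> [] \<and> sorted_wrt (>) r) \<and>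
     (\<forall>i. Suc i < length rs \<longrightarrow> \<not> (last (rs ! i) > hd (rs ! Suc i)))"

text \<open>A lattice path is a list of steps, True = up step (1,1), False = down step (1,-1).
  height D j is the height of the point after the first j steps.\<close>
definition height :: "bool list \<Rightarrow> nat \<Rightarrow> int" where
  "height D j = int (length (filter id (take j D))) - int (length (filter Not (take j D)))"

definition dyck_path :: "nat \<Rightarrow> bool list \<Rightarrow> bool" where
  "dyck_path m D \<longleftrightarrow> length D = 2 * m \<and> height D (2 * m) = 0 \<and>
     (\<forall>j \<le> 2 * m. height D j \<ge> 0)"

definition is_peak :: "bool list \<Rightarrow> nat \<Rightarrow> bool" where
  "is_peak D j \<longleftrightarrow> 1 \<le> j \<and> j < length D \<and> D ! (j - 1) \<and> \<not> D ! j"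

definition high_peaks :: "bool list \<Rightarrow> nat list" where
  "high_peaks D = filter (\<lambda>j. is_peak D j \<and> height D j \<ge> 2) [0..<length D]"

definition peak_run :: "bool list \<Rightarrow> nat \<Rightarrow> nat list" where
  "peak_run D a =
     (let b = nat (height D a); p = (a + b - 2) div 2; r = b - 1 in map (\<lambda>t. p - t) [0..<r])"

definition Phi_runs :: "bool list \<Rightarrow> nat list list" where
  "Phi_runs D = map (peak_run D) (high_peaks D)"

definition Phi :: "bool list \<Rightarrow> nat list" where
  "Phi D = concat (Phi_runs D)"

end

theory Submission
  imports Defs
begin

text \<open>Record a point of a path by the numbers u, d of up and down steps before it. A high peak
  is then a pair (U, D) with D + 2 \<le> U whose run is x_(U-1) \<dots> x_(D+1), and the high peaks of
  a Dyck path of semilength n + 1 form a list of pairs that increase strictly in both coordinates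
  and satisfy U \<le> n + 1. Every such list arises from exactly one Dyck path, because the low
  peaks are forced, so Phi is this bijection followed by concatenation of runs.

  The concatenated word is not reducible: for each i the letters i, i + 1 alternate in it, commuting
  letters preserves this subword, and every zero relation breaks the alternation, so the sum of
  coefficients over the commutation class is a linear functional that vanishes on the ideal but
  not on the word. The same subwords show that the word is lexicographically least in its class.
  Conversely, in an nTL-monomial consecutive letters either descend by one or increase, which cuts
  it into decreasing runs; if two consecutive runs did not increase both at the top and at the
  bottom, a letter could be commuted next to a zero relation x_(c+1) x_c x_(c+1) or x_c x_(c+1) x_c.\<close>

section \<open>Dyck paths and their high peaks\<close>

definition ups :: "bool list \<Rightarrow> nat" where
  "ups xs = length (filter id xs)"

definition downs :: "bool list \<Rightarrow> nat" where
  "downs xs = length (filter Not xs)"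

lemma ups_simps [simp]:
  "ups [] = 0" "ups (x # xs) = (if x then Suc (ups xs) else ups xs)" "ups (xs @ ys) = ups xs + ups ys"
  by (auto simp: ups_def)

lemma downs_simps [simp]:
  "downs [] = 0" "downs (x # xs) = (if x then downs xs else Suc (downs xs))"
  "downs (xs @ ys) = downs xs + downs ys"
  by (auto simp: downs_def)

lemma ups_plus_downs: "ups xs + downs xs = length xs"
  by (induction xs) auto

lemma ups_replicate [simp]: "ups (replicate k x) = (if x then k else 0)"
  by (induction k) auto

lemma downs_replicate [simp]: "downs (replicate k x) = (if x then 0 else k)"
  by (induction k) auto

lemma ups_low_peaks [simp]: "ups (concat (replicate k [True, False])) = k"
  by (induction k) auto

lemma downs_low_peaks [simp]: "downs (concat (replicate k [True, False])) = k"
  by (induction k) auto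

primrec stays_nonneg :: "nat \<Rightarrow> nat \<Rightarrow> bool list \<Rightarrow> bool" where
  "stays_nonneg u d [] \<longleftrightarrow> d \<le> u"
| "stays_nonneg u d (x # r) \<longleftrightarrow>
     d \<le> u \<and> (if x then stays_nonneg (Suc u) d r else stays_nonneg u (Suc d) r)"

lemma stays_nonneg_le: "stays_nonneg u d r \<Longrightarrow> d \<le> u"
  by (cases r) auto

lemma stays_nonneg_iff_prefixes:
  "stays_nonneg u d D \<longleftrightarrow> (\<forall>j\<le>length D. d + downs (take j D) \<le> u + ups (take j D))"
proof (induction D arbitrary: u d)
  case (Cons x r)
  have all_le_Suc: "(\<forall>j\<le>Suc n. P j) \<longleftrightarrow> P 0 \<and> (\<forall>j\<le>n. P (Suc j))" for n and P :: "nat \<Rightarrow> bool"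
    by (metis Suc_le_mono le0 not0_implies_Suc)
  show ?case
    unfolding length_Cons all_le_Suc using Cons.IH by (auto simp: stays_nonneg_le)
qed simp

lemma stays_nonneg_replicate_down:
  "stays_nonneg u d (replicate k False @ ys) \<longleftrightarrow> d + k \<le> u \<and> stays_nonneg u (d + k) ys"
proof (induction k arbitrary: d)
  case 0
  show ?case using stays_nonneg_le[of u d ys] by auto
next
  case (Suc k)
  have "stays_nonneg u d (replicate (Suc k) False @ ys)
      \<longleftrightarrow> d \<le> u \<and> stays_nonneg u (Suc d) (replicate k False @ ys)"
    by simp
  also have "\<dots> \<longleftrightarrow> d \<le> u \<and> Suc d + k \<le> u \<and> stays_nonneg u (Suc d + k) ys"
    using Suc by simp
  finally show ?case by auto
qed

lemma stays_nonneg_replicate_up: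
  "stays_nonneg u d (replicate k True @ ys) \<longleftrightarrow> d \<le> u \<and> stays_nonneg (u + k) d ys"
proof (induction k arbitrary: u)
  case 0
  show ?case using stays_nonneg_le[of u d ys] by auto
next
  case (Suc k)
  have "stays_nonneg u d (replicate (Suc k) True @ ys)
      \<longleftrightarrow> d \<le> u \<and> stays_nonneg (Suc u) d (replicate k True @ ys)"
    by simp
  also have "\<dots> \<longleftrightarrow> d \<le> u \<and> d \<le> Suc u \<and> stays_nonneg (Suc u + k) d ys"
    using Suc by simp
  finally show ?case by auto
qed

lemma stays_nonneg_low_peaks:
  "stays_nonneg u u (concat (replicate k [True, False]) @ ys) \<longleftrightarrow> stays_nonneg (u + k) (u + k) ys"
  by (induction k arbitrary: u) auto

lemma dyck_path_iff:
  "dyck_path m D \<longleftrightarrow> length D = 2 * m \<and> ups D = m \<and> downs D = m \<and> stays_nonneg 0 0 D"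
proof -
  have height: "height D j = int (ups (take j D)) - int (downs (take j D))" for j
    by (simp add: height_def ups_def downs_def)
  show ?thesis
  proof
    assume D: "dyck_path m D"
    then have len: "length D = 2 * m" by (simp add: dyck_path_def)
    with D height[of "2 * m"] have "ups D = downs D" by (simp add: dyck_path_def)
    moreover have "stays_nonneg 0 0 D"
      unfolding stays_nonneg_iff_prefixes using D len height by (auto simp: dyck_path_def)
    ultimately show "length D = 2 * m \<and> ups D = m \<and> downs D = m \<and> stays_nonneg 0 0 D"
      using len ups_plus_downs[of D] by simp
  next
    assume "length D = 2 * m \<and> ups D = m \<and> downs D = m \<and> stays_nonneg 0 0 D"
    then show "dyck_path m D"
      unfolding dyck_path_def using height stays_nonneg_iff_prefixes[of 0 0 D] by auto
  qed
qed

text \<open>A peak (a, b) with u up and d down steps before it has a = u + d and b = u - d, so the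
  paper's p = (a + b - 2)/2 and r = b - 1 become u - 1 and u - d - 1: its run is
  x_(u-1) \<dots> x_(d+1), and the peak is high iff d + 2 \<le> u.\<close>

primrec high_peak_pairs :: "nat \<Rightarrow> nat \<Rightarrow> bool list \<Rightarrow> (nat \<times> nat) list" where
  "high_peak_pairs u d [] = []"
| "high_peak_pairs u d (x # r) =
     (if x then (if r \<noteq> [] \<and> \<not> hd r \<and> d + 2 \<le> Suc u then [(Suc u, d)] else [])
                @ high_peak_pairs (Suc u) d r
      else high_peak_pairs u (Suc d) r)"

definition run :: "nat \<times> nat \<Rightarrow> nat list" where
  "run p = rev [Suc (snd p)..<fst p]"

definition runs_word :: "(nat \<times> nat) list \<Rightarrow> nat list" where
  "runs_word S = concat (map run S)"

lemma runs_word_simps [simp]: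
  "runs_word [] = []" "runs_word (p # S) = run p @ runs_word S"
  "runs_word (S @ S') = runs_word S @ runs_word S'"
  by (simp_all add: runs_word_def)

lemma high_peak_pairs_eq_filter:
  "map (\<lambda>j. (ups (take j (P @ D)), downs (take j (P @ D))))
     (filter (\<lambda>j. is_peak (P @ D) j \<and> height (P @ D) j \<ge> 2) [Suc (length P)..<length (P @ D)])
   = high_peak_pairs (ups P) (downs P) D"
proof (induction D arbitrary: P)
  case (Cons x r)
  show ?case
  proof (cases "r = []")
    case False
    have lt: "Suc (length P) < length (P @ x # r)"
      using False by (cases r) auto
    have peak: "is_peak (P @ x # r) (Suc (length P)) \<longleftrightarrow> x \<and> \<not> hd r"
      using False by (cases r) (auto simp: is_peak_def nth_append)
    have prefix: "take (Suc (length P)) (P @ x # r) = P @ [x]"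
      by simp
    have "height (P @ x # r) (Suc (length P)) = int (ups (P @ [x])) - int (downs (P @ [x]))"
      unfolding height_def prefix by (simp add: ups_def downs_def)
    moreover have "filter Q [Suc (length P)..<length (P @ x # r)]
        = (if Q (Suc (length P)) then [Suc (length P)] else []) @ filter Q [Suc (Suc (length P))..<length (P @ x # r)]"
      for Q
      unfolding upt_conv_Cons[OF lt] by simp
    ultimately show ?thesis
      using Cons.IH[of "P @ [x]"] peak False by (auto simp: prefix)
  qed simp
qed simp

lemma run_map_minus: "r \<le> Suc p \<Longrightarrow> map (\<lambda>t. p - t) [0..<r] = rev [Suc p - r..<Suc p]"
proof (induction r)
  case (Suc r)
  have "[p - r..<Suc p] = (p - r) # [Suc p - Suc r + 1..<Suc p]"
    using Suc.prems by (simp add: upt_conv_Cons Suc_diff_le) arith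
  then show ?case using Suc by (simp add: Suc_diff_le)
qed simp

lemma Phi_runs_eq: "Phi_runs D = map run (high_peak_pairs 0 0 D)"
proof -
  let ?pair = "\<lambda>j. (ups (take j D), downs (take j D))"
  have peak_run: "peak_run D j = run (?pair j)" if "j \<in> set (high_peaks D)" for j
  proof -
    define u d where "u = ups (take j D)" and "d = downs (take j D)"
    from that have j: "j < length D" "height D j \<ge> 2"
      by (auto simp: high_peaks_def)
    have "j = u + d"
      using ups_plus_downs[of "take j D"] j by (simp add: u_def d_def)
    moreover have "height D j = int u - int d"
      by (simp add: height_def u_def d_def ups_def downs_def)
    ultimately have "nat (height D j) = u - d" "(j + (u - d) - 2) div 2 = u - 1" "d + 2 \<le> u"
      using j by auto
    then show ?thesis
      unfolding peak_run_def Let_def by (subst run_map_minus) (auto simp: run_def u_def d_def)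
  qed
  have "high_peaks D = filter (\<lambda>j. is_peak D j \<and> height D j \<ge> 2) [Suc 0..<length D]"
    unfolding high_peaks_def
    by (cases "length D") (simp, subst upt_conv_Cons, auto simp: is_peak_def)
  then have "map ?pair (high_peaks D) = high_peak_pairs 0 0 D"
    using high_peak_pairs_eq_filter[of "[]" D] by simp
  moreover have "map (peak_run D) (high_peaks D) = map run (map ?pair (high_peaks D))"
    using peak_run by simp
  ultimately show ?thesis
    unfolding Phi_runs_def by simp
qed

lemma Phi_eq: "Phi D = runs_word (high_peak_pairs 0 0 D)"
  by (simp add: Phi_def Phi_runs_eq runs_word_def)

definition pair_less :: "nat \<times> nat \<Rightarrow> nat \<times> nat \<Rightarrow> bool" where
  "pair_less p q \<longleftrightarrow> fst p < fst q \<and> snd p < snd q"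

lemma transp_pair_less: "transp pair_less"
  unfolding transp_def pair_less_def by auto

definition valid_pairs :: "nat \<Rightarrow> nat \<Rightarrow> nat \<Rightarrow> (nat \<times> nat) list \<Rightarrow> bool" where
  "valid_pairs u d N S \<longleftrightarrow> sorted_wrt pair_less S \<and>
     (\<forall>p\<in>set S. u < fst p \<and> d \<le> snd p \<and> snd p + 2 \<le> fst p \<and> fst p \<le> N)"

lemma high_peak_pairs_bounds:
  "p \<in> set (high_peak_pairs u d X) \<Longrightarrow>
     u < fst p \<and> d \<le> snd p \<and> snd p + 2 \<le> fst p \<and> fst p \<le> u + ups X"
proof (induction X arbitrary: u d)
  case (Cons x r)
  then show ?case
    by (cases x) (auto split: if_splits dest!: Cons.IH)
qed simp

lemma sorted_high_peak_pairs: "sorted_wrt pair_less (high_peak_pairs u d X)"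
proof (induction X arbitrary: u d)
  case (Cons x r)
  have "pair_less (Suc u, d) q" if "r = False # r'" "q \<in> set (high_peak_pairs (Suc u) d r)" for r' q
    using that high_peak_pairs_bounds[of q "Suc u" "Suc d" r'] by (simp add: pair_less_def)
  then show ?case
    using Cons.IH by (cases r) (auto simp: sorted_wrt_append)
qed simp

lemma valid_pairs_high_peak_pairs:
  "dyck_path m D \<Longrightarrow> valid_pairs 0 0 m (high_peak_pairs 0 0 D)"
  using sorted_high_peak_pairs[of 0 0 D] high_peak_pairs_bounds[of _ 0 0 D]
  unfolding dyck_path_iff valid_pairs_def by auto

lemma high_peak_pairs_up_reaches_peak:
  "False \<in> set r \<Longrightarrow> d + 1 \<le> u \<Longrightarrow> \<exists>U. (U, d) \<in> set (high_peak_pairs u d (True # r))"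
proof (induction r arbitrary: u)
  case (Cons y r)
  then show ?case
    by (cases y) (auto dest: Cons.IH[of "Suc u"])
qed simp

text \<open>The path starting with an up step still has to come down, and it meets a high peak
  before its (d + 1)-st down step; the other path has already taken that step.\<close>

lemma high_peak_pairs_up_ne_down:
  assumes "stays_nonneg u d (False # r2)" "u + ups (True # r1) = d + downs (True # r1)"
  shows "high_peak_pairs u d (True # r1) \<noteq> high_peak_pairs u d (False # r2)"
proof
  assume eq: "high_peak_pairs u d (True # r1) = high_peak_pairs u d (False # r2)"
  from assms(1) have "d + 1 \<le> u"
    by (auto dest: stays_nonneg_le)
  moreover have "downs r1 \<noteq> 0"
    using assms(2) \<open>d + 1 \<le> u\<close> by simp
  then have "False \<in> set r1"
    by (induction r1) (auto split: if_splits)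
  ultimately obtain U where "(U, d) \<in> set (high_peak_pairs u d (True # r1))"
    using high_peak_pairs_up_reaches_peak by blast
  then have "(U, d) \<in> set (high_peak_pairs u (Suc d) r2)"
    unfolding eq by simp
  then show False
    using high_peak_pairs_bounds by fastforce
qed

lemma high_peak_pairs_up_cancel:
  assumes "high_peak_pairs u d (True # r1) = high_peak_pairs u d (True # r2)"
  shows "high_peak_pairs (Suc u) d r1 = high_peak_pairs (Suc u) d r2"
proof -
  \<comment> \<open>a peak at the first step is recognisable: all later peaks have larger up counts\<close>
  have "(Suc u, d) \<notin> set (high_peak_pairs (Suc u) d r)" for r
    using high_peak_pairs_bounds by fastforce
  then have peak_here: "(Suc u, d) \<in> set (high_peak_pairs u d (True # r))
      \<longleftrightarrow> r \<noteq> [] \<and> \<not> hd r \<and> d + 1 \<le> u" for r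
    by auto
  have "r1 \<noteq> [] \<and> \<not> hd r1 \<and> d + 1 \<le> u \<longleftrightarrow> r2 \<noteq> [] \<and> \<not> hd r2 \<and> d + 1 \<le> u"
    using peak_here[of r1] peak_here[of r2] assms by metis
  with assms show ?thesis
    by (auto split: if_splits)
qed

lemma high_peak_pairs_inj:
  assumes "stays_nonneg u d D1" "stays_nonneg u d D2"
    "u + ups D1 = d + downs D1" "u + ups D2 = d + downs D2"
    "length D1 = length D2" "high_peak_pairs u d D1 = high_peak_pairs u d D2"
  shows "D1 = D2"
  using assms
proof (induction D1 arbitrary: D2 u d)
  case (Cons x1 r1)
  then obtain x2 r2 where D2: "D2 = x2 # r2"
    by (cases D2) auto
  show ?case
  proof (cases x1; cases x2)
    assume "x1" "x2"
    with Cons.prems D2 have "r1 = r2"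
      by (intro Cons.IH[of "Suc u" d r2]) (auto intro: high_peak_pairs_up_cancel)
    with \<open>x1\<close> \<open>x2\<close> D2 show ?thesis
      by simp
  next
    assume "\<not> x1" "\<not> x2"
    with Cons.prems D2 have "r1 = r2"
      by (intro Cons.IH[of u "Suc d" r2]) auto
    with \<open>\<not> x1\<close> \<open>\<not> x2\<close> D2 show ?thesis
      by simp
  next
    assume "x1" "\<not> x2"
    then show ?thesis
      using Cons.prems D2 high_peak_pairs_up_ne_down[of u d r2 r1] by auto
  next
    assume "\<not> x1" "x2"
    then show ?thesis
      using Cons.prems D2 high_peak_pairs_up_ne_down[of u d r1 r2] by auto
  qed
qed simp

section \<open>Reconstructing a Dyck path from its high peaks\<close>

lemma high_peak_pairs_replicate_down:
  "high_peak_pairs u d (replicate k False @ ys) = high_peak_pairs u (d + k) ys"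
  by (induction k arbitrary: d) auto

lemma high_peak_pairs_low_peaks:
  "high_peak_pairs u u (concat (replicate k [True, False]) @ ys) = high_peak_pairs (u + k) (u + k) ys"
  by (induction k arbitrary: u) auto

lemma high_peak_pairs_climb:
  "high_peak_pairs u d (replicate (Suc k) True @ False # ys) =
     (if d + 2 \<le> u + Suc k then [(u + Suc k, d)] else []) @ high_peak_pairs (u + Suc k) d (False # ys)"
proof (induction k arbitrary: u)
  case (Suc k)
  have "high_peak_pairs u d (replicate (Suc (Suc k)) True @ False # ys)
      = high_peak_pairs (Suc u) d (replicate (Suc k) True @ False # ys)"
    by simp
  then show ?case
    using Suc[of "Suc u"] by simp
qed simp

text \<open>The canonical path through the peaks of a valid pair list: from the current point it
  descends towards the down count D of the next peak, pads with low peaks UD (which Phi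
  ignores) while the up count lags behind D, climbs to the peak and steps down.\<close>

definition segment_to_peak :: "nat \<Rightarrow> nat \<Rightarrow> nat \<Rightarrow> nat \<Rightarrow> bool list" where
  "segment_to_peak u d U D = replicate (min u D - d) False @ concat (replicate (D - u) [True, False])
     @ replicate (U - max u D) True @ [False]"

definition final_segment :: "nat \<Rightarrow> nat \<Rightarrow> nat \<Rightarrow> bool list" where
  "final_segment u d N = replicate (u - d) False @ concat (replicate (N - u) [True, False])"

fun path_of_pairs :: "nat \<Rightarrow> nat \<Rightarrow> (nat \<times> nat) list \<Rightarrow> nat \<Rightarrow> bool list" where
  "path_of_pairs u d [] N = final_segment u d N"
| "path_of_pairs u d (p # S) N = segment_to_peak u d (fst p) (snd p) @ path_of_pairs (fst p) (Suc (snd p)) S N"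

lemma segment_to_peak_props:
  assumes "d \<le> u" "u < U" "d \<le> D" "D + 2 \<le> U"
  shows "high_peak_pairs u d (segment_to_peak u d U D @ ys) = (U, D) # high_peak_pairs U (Suc D) ys"
      (is ?pairs)
    and "stays_nonneg u d (segment_to_peak u d U D @ ys) \<longleftrightarrow> stays_nonneg U (Suc D) ys" (is ?nonneg)
    and "ups (segment_to_peak u d U D) = U - u" (is ?ups)
    and "downs (segment_to_peak u d U D) = Suc D - d" (is ?downs)
proof -
  consider (valley) "D \<le> u" | (low_peaks) "u < D"
    by linarith
  then have "?pairs \<and> ?nonneg \<and> ?ups \<and> ?downs"
  proof cases
    case valley
    define k where "k = U - Suc u"
    have U: "U = u + Suc k"
      using assms by (simp add: k_def)
    have "segment_to_peak u d U D = replicate (D - d) False @ replicate (Suc k) True @ [False]"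
      using valley U by (simp add: segment_to_peak_def)
    then show ?thesis
      using assms valley U
      by (simp add: high_peak_pairs_replicate_down stays_nonneg_replicate_down
          high_peak_pairs_climb stays_nonneg_replicate_up del: replicate_Suc)
  next
    case low_peaks
    define k where "k = U - Suc D"
    have U: "U = D + Suc k"
      using assms by (simp add: k_def)
    have "segment_to_peak u d U D = replicate (u - d) False @ concat (replicate (D - u) [True, False])
        @ replicate (Suc k) True @ [False]"
      using low_peaks U by (simp add: segment_to_peak_def)
    moreover have "d + (u - d) = u" "u + (D - u) = D"
      using assms low_peaks by simp_all
    ultimately show ?thesis
      using assms low_peaks U
      by (simp add: high_peak_pairs_replicate_down stays_nonneg_replicate_down
          high_peak_pairs_low_peaks stays_nonneg_low_peaks
          high_peak_pairs_climb stays_nonneg_replicate_up del: replicate_Suc) arith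
  qed
  then show ?pairs ?nonneg ?ups ?downs
    by simp_all
qed

lemma path_of_pairs_props:
  assumes "d \<le> u" "u \<le> N" "valid_pairs u d N S"
  shows "high_peak_pairs u d (path_of_pairs u d S N) = S \<and> stays_nonneg u d (path_of_pairs u d S N)
    \<and> ups (path_of_pairs u d S N) = N - u \<and> downs (path_of_pairs u d S N) = N - d"
  using assms
proof (induction S arbitrary: u d)
  case Nil
  have "high_peak_pairs u u (concat (replicate (N - u) [True, False]) @ []) = []"
    "stays_nonneg u u (concat (replicate (N - u) [True, False]) @ [])"
    unfolding high_peak_pairs_low_peaks stays_nonneg_low_peaks using Nil by simp_all
  then show ?case
    using Nil by (simp add: final_segment_def high_peak_pairs_replicate_down stays_nonneg_replicate_down)
next
  case (Cons p S)
  obtain U D where p: "p = (U, D)"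
    by fastforce
  from Cons.prems p have bounds: "u < U" "d \<le> D" "D + 2 \<le> U" "U \<le> N"
    by (auto simp: valid_pairs_def)
  have "valid_pairs U (Suc D) N S"
    using Cons.prems p by (auto simp: valid_pairs_def pair_less_def)
  with bounds have "high_peak_pairs U (Suc D) (path_of_pairs U (Suc D) S N) = S
    \<and> stays_nonneg U (Suc D) (path_of_pairs U (Suc D) S N)
    \<and> ups (path_of_pairs U (Suc D) S N) = N - U \<and> downs (path_of_pairs U (Suc D) S N) = N - Suc D"
    by (intro Cons.IH) simp_all
  then show ?case
    using bounds Cons.prems(1) p by (simp add: segment_to_peak_props)
qed

lemma bij_betw_high_peak_pairs:
  "bij_betw (high_peak_pairs 0 0) {D. dyck_path m D} {S. valid_pairs 0 0 m S}"
  unfolding bij_betw_def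
proof (intro conjI subset_antisym)
  show "inj_on (high_peak_pairs 0 0) {D. dyck_path m D}"
    by (rule inj_onI) (auto simp: dyck_path_iff intro: high_peak_pairs_inj)
  show "high_peak_pairs 0 0 ` {D. dyck_path m D} \<subseteq> {S. valid_pairs 0 0 m S}"
    using valid_pairs_high_peak_pairs by blast
  show "{S. valid_pairs 0 0 m S} \<subseteq> high_peak_pairs 0 0 ` {D. dyck_path m D}"
  proof
    fix S
    assume "S \<in> {S. valid_pairs 0 0 m S}"
    then have "high_peak_pairs 0 0 (path_of_pairs 0 0 S m) = S \<and> stays_nonneg 0 0 (path_of_pairs 0 0 S m)
      \<and> ups (path_of_pairs 0 0 S m) = m \<and> downs (path_of_pairs 0 0 S m) = m"
      using path_of_pairs_props[of 0 0 m S] by simp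
    moreover from this have "dyck_path m (path_of_pairs 0 0 S m)"
      unfolding dyck_path_iff using ups_plus_downs[of "path_of_pairs 0 0 S m"] by simp
    ultimately show "S \<in> high_peak_pairs 0 0 ` {D. dyck_path m D}"
      by (metis image_eqI mem_Collect_eq)
  qed
qed

section \<open>Alternating words are not reducible\<close>

definition pair_subword :: "nat \<Rightarrow> nat list \<Rightarrow> nat list" where
  "pair_subword i w = filter (\<lambda>z. z = i \<or> z = Suc i) w"

definition alternating :: "nat list \<Rightarrow> bool" where
  "alternating w \<longleftrightarrow> (\<forall>i. successively (\<noteq>) (pair_subword i w))"

lemma pair_subword_simps [simp]:
  "pair_subword i [] = []" "pair_subword i (xs @ ys) = pair_subword i xs @ pair_subword i ys"
  by (simp_all add: pair_subword_def)

lemma swap_step_sym: "swap_step x y \<Longrightarrow> swap_step y x"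
  unfolding swap_step_def by blast

lemma word_equiv_sym: "word_equiv x y \<Longrightarrow> word_equiv y x"
  unfolding word_equiv_def
proof (induction rule: rtranclp_induct)
  case (step y z)
  then show ?case
    by (metis swap_step_sym converse_rtranclp_into_rtranclp)
qed simp

lemma swap_step_pair_subword: "swap_step x y \<Longrightarrow> pair_subword i x = pair_subword i y"
  unfolding swap_step_def pair_subword_def by auto

lemma word_equiv_pair_subword: "word_equiv x y \<Longrightarrow> pair_subword i x = pair_subword i y"
  unfolding word_equiv_def by (induction rule: rtranclp_induct) (auto dest: swap_step_pair_subword)

lemma swap_step_set_length: "swap_step x y \<Longrightarrow> set x = set y \<and> length x = length y"
  unfolding swap_step_def by auto

lemma word_equiv_set_length: "word_equiv x y \<Longrightarrow> set x = set y \<and> length x = length y"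
  unfolding word_equiv_def by (induction rule: rtranclp_induct) (auto dest: swap_step_set_length)

lemma alternating_no_zero_rel: "alternating (u @ m @ v) \<Longrightarrow> \<not> zero_rel n m"
proof
  assume alt: "alternating (u @ m @ v)" and "zero_rel n m"
  then obtain j a where "pair_subword j m = [a, a]"
    unfolding zero_rel_def
  proof (elim disjE exE conjE)
    fix i
    assume "m = [i, i]"
    then show ?thesis
      using that[of i i] by (simp add: pair_subword_def)
  next
    fix i
    assume "1 \<le> i" "m = [i, Suc i, i]"
    then show ?thesis
      using that[of "i - 1" i] by (simp add: pair_subword_def)
  next
    fix i
    assume "m = [Suc i, i, Suc i]"
    then show ?thesis
      using that[of "Suc i" "Suc i"] by (simp add: pair_subword_def)
  qed
  moreover have "successively (\<noteq>) (pair_subword j u @ pair_subword j m @ pair_subword j v)"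
    using alt by (simp add: alternating_def)
  ultimately show False
    by (simp add: successively_append_iff)
qed

lemma ideal_coeff_sum_zero:
  fixes f :: "nat list \<Rightarrow>\<^sub>0 'k::field"
  assumes "in_nTL_ideal n f" "finite C"
    and "\<And>u m v. u @ m @ v \<in> C \<Longrightarrow> \<not> zero_rel n m"
    and "\<And>u a b v. comm_rel n a b \<Longrightarrow> u @ a @ v \<in> C \<longleftrightarrow> u @ b @ v \<in> C"
  shows "(\<Sum>x\<in>C. Poly_Mapping.lookup f x) = 0"
  using assms(1)
proof (induction rule: in_nTL_ideal.induct)
  case (mono f m u v c)
  have "u @ m @ v \<notin> C"
    using assms(3) mono.hyps(2) by blast
  then show ?case
    using mono.IH assms(2) by (simp add: lookup_add lookup_single sum.distrib when_def)
next
  case (comm f a b u v c)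
  have "(\<Sum>x\<in>C. Poly_Mapping.lookup (Poly_Mapping.single (u @ a @ v) c) x)
      = (\<Sum>x\<in>C. Poly_Mapping.lookup (Poly_Mapping.single (u @ b @ v) c) x)"
    using assms(4)[OF comm.hyps(2), of u v] assms(2) by (simp add: lookup_single when_def)
  then show ?case
    using comm.IH assms(2) by (simp add: lookup_add lookup_minus sum.distrib sum_subtractf)
qed simp

lemma alternating_not_reducible:
  assumes "alternating w"
  shows "\<not> reducible TYPE('k::field) n w"
proof
  assume "reducible TYPE('k) n w"
  then have ideal: "in_nTL_ideal n (Poly_Mapping.single w (1::'k))"
    by (simp add: reducible_def)
  define C where "C = {x. word_equiv w x}"
  have "C \<subseteq> {x. set x \<subseteq> set w \<and> length x = length w}"
    unfolding C_def using word_equiv_set_length by fastforce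
  then have fin: "finite C"
    by (rule finite_subset) (simp add: finite_lists_length_eq)
  have "alternating x" if "x \<in> C" for x
    using that assms word_equiv_pair_subword by (simp add: C_def alternating_def)
  then have "\<not> zero_rel n m" if "u @ m @ v \<in> C" for u m v
    using that alternating_no_zero_rel by blast
  moreover have "u @ a @ v \<in> C \<longleftrightarrow> u @ b @ v \<in> C" if "comm_rel n a b" for u a b v
  proof -
    from that have "swap_step (u @ a @ v) (u @ b @ v)"
      unfolding comm_rel_def swap_step_def by blast
    then have "word_equiv (u @ a @ v) (u @ b @ v)" "word_equiv (u @ b @ v) (u @ a @ v)"
      unfolding word_equiv_def by (auto intro: swap_step_sym)
    then show ?thesis
      unfolding C_def word_equiv_def by (auto intro: rtranclp_trans)
  qed
  ultimately have "(\<Sum>x\<in>C. Poly_Mapping.lookup (Poly_Mapping.single w (1::'k)) x) = 0"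
    using ideal_coeff_sum_zero[OF ideal fin] by blast
  moreover have "w \<in> C"
    by (simp add: C_def word_equiv_def)
  ultimately show False
    using fin by (simp add: lookup_single when_def)
qed

section \<open>Words of valid pair lists are nTL-monomials\<close>

lemma pair_subword_run:
  "pair_subword i (rev [a..<b]) = (if a \<le> Suc i \<and> Suc i < b then [Suc i] else []) @
     (if a \<le> i \<and> i < b then [i] else [])"
proof -
  have "pair_subword i [a..<b] = (if a \<le> i \<and> i < b then [i] else []) @
      (if a \<le> Suc i \<and> Suc i < b then [Suc i] else [])"
    by (induction b) (auto simp: pair_subword_def)
  then show ?thesis
    by (simp add: pair_subword_def flip: rev_filter)
qed

lemma set_runs_word: "x \<in> set (runs_word S) \<Longrightarrow> \<exists>p\<in>set S. snd p < x \<and> x < fst p"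
  by (induction S) (auto simp: run_def)

lemma pair_subword_runs_word_Nil:
  "\<forall>p\<in>set S. Suc i \<le> snd p \<Longrightarrow> pair_subword i (runs_word S) = []"
  unfolding pair_subword_def filter_empty_conv using set_runs_word by fastforce

lemma pair_subword_runs_word_hd:
  "\<forall>p\<in>set S. Suc (Suc i) \<le> fst p \<Longrightarrow>
     pair_subword i (runs_word S) = [] \<or> hd (pair_subword i (runs_word S)) = Suc i"
  by (induction S) (auto simp: run_def pair_subword_run)

lemma alternating_runs_word:
  "sorted_wrt pair_less S \<Longrightarrow> \<forall>p\<in>set S. snd p + 2 \<le> fst p \<Longrightarrow> alternating (runs_word S)"
proof (induction S)
  case (Cons p S)
  obtain U D where p: "p = (U, D)"
    by fastforce
  have later: "\<forall>q\<in>set S. U < fst q \<and> D < snd q"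
    using Cons.prems p by (auto simp: pair_less_def)
  show ?case
    unfolding alternating_def
  proof
    fix i
    have "successively (\<noteq>) (pair_subword i (runs_word S))"
      using Cons by (simp add: alternating_def)
    moreover have "successively (\<noteq>) (pair_subword i (run p))"
      by (simp add: p run_def pair_subword_run)
    moreover have "pair_subword i (run p) = [] \<or> pair_subword i (runs_word S) = []
        \<or> last (pair_subword i (run p)) \<noteq> hd (pair_subword i (runs_word S))"
    proof (cases "Suc D \<le> i \<and> i < U")
      case True
      then have "last (pair_subword i (run p)) = i"
        by (simp add: p run_def pair_subword_run)
      moreover have "pair_subword i (runs_word S) = [] \<or> hd (pair_subword i (runs_word S)) = Suc i"
        using later True by (intro pair_subword_runs_word_hd) auto
      ultimately show ?thesis
        by auto
    next
      case False
      then have "pair_subword i (run p) = [] \<or> D = i"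
        by (auto simp: p run_def pair_subword_run)
      moreover have "D = i \<Longrightarrow> pair_subword i (runs_word S) = []"
        using later by (intro pair_subword_runs_word_Nil) auto
      ultimately show ?thesis
        by auto
    qed
    ultimately show "successively (\<noteq>) (pair_subword i (runs_word (p # S)))"
      by (simp add: successively_append_iff)
  qed
qed (simp add: alternating_def)

text \<open>A letter b can never be commuted to the left of a letter a \<ge> b + 2 preceding it, since
  a letter b + 1 occurs in between.\<close>

definition lex_minimal_form :: "nat list \<Rightarrow> bool" where
  "lex_minimal_form w \<longleftrightarrow> (\<forall>k<length w. \<forall>b. b + 2 \<le> w ! k \<longrightarrow>
     pair_subword b (drop k w) = [] \<or> hd (pair_subword b (drop k w)) = Suc b)"

lemma nth_run: "k < U - Suc D \<Longrightarrow> run (U, D) ! k = U - Suc k"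
  by (simp add: run_def rev_nth)

lemma drop_run:
  assumes "D < U"
  shows "drop k (run (U, D)) = rev [Suc D..<U - k]"
proof (cases "k \<le> U - Suc D")
  case True
  have "take (U - Suc D - k) [Suc D..<U] = [Suc D..<Suc D + (U - Suc D - k)]"
    by (rule take_upt) (use True assms in linarith)
  moreover have "Suc D + (U - Suc D - k) = U - k"
    using True assms by linarith
  moreover have "drop k (run (U, D)) = rev (take (U - Suc D - k) [Suc D..<U])"
    unfolding run_def drop_rev by simp
  ultimately show ?thesis
    by metis
qed (simp add: run_def drop_rev)

lemma lex_minimal_form_runs_word:
  "sorted_wrt pair_less S \<Longrightarrow> \<forall>p\<in>set S. snd p + 2 \<le> fst p \<Longrightarrow> lex_minimal_form (runs_word S)"
proof (induction S)
  case (Cons p S)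
  obtain U D where p: "p = (U, D)"
    by fastforce
  have later: "\<forall>q\<in>set S. U < fst q \<and> D < snd q"
    using Cons.prems p by (auto simp: pair_less_def)
  show ?case
    unfolding lex_minimal_form_def
  proof (intro allI impI)
    fix k b
    assume k: "k < length (runs_word (p # S))" and b: "b + 2 \<le> runs_word (p # S) ! k"
    show "pair_subword b (drop k (runs_word (p # S))) = [] \<or>
        hd (pair_subword b (drop k (runs_word (p # S)))) = Suc b"
    proof (cases "k < length (run p)")
      case True
      then have "runs_word (p # S) ! k = U - Suc k"
        using nth_run p by (simp add: nth_append run_def)
      moreover have "drop k (runs_word (p # S)) = rev [Suc D..<U - k] @ runs_word S"
        using True p Cons.prems drop_run by simp
      moreover have "b < D \<Longrightarrow> pair_subword b (runs_word S) = []"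
        using later by (intro pair_subword_runs_word_Nil) auto
      ultimately show ?thesis
        using b by (auto simp: pair_subword_run)
    next
      case False
      then show ?thesis
        using Cons k b by (simp add: nth_append lex_minimal_form_def)
    qed
  qed
qed (simp add: lex_minimal_form_def)

lemma lex_minimal_form_least:
  assumes "lex_minimal_form w" "length x = length w" "\<forall>i. pair_subword i x = pair_subword i w"
  shows "x = w \<or> lex_less w x"
proof (rule ccontr)
  assume "\<not> (x = w \<or> lex_less w x)"
  then have "(x, w) \<in> lexord {(a, b). a < b}"
    using lexord_linear[of "{(a, b). a < b}" x w] by (force simp: lex_less_def)
  with assms(2) obtain s a b r1 r2 where w: "w = s @ a # r1" and x: "x = s @ b # r2" and "b < a"
    unfolding lexord_def by auto
  have suffix: "pair_subword i (b # r2) = pair_subword i (a # r1)" for i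
    using assms(3) w x by simp
  show False
  proof (cases "a = Suc b")
    case True
    then show False
      using suffix[of b] by (simp add: pair_subword_def)
  next
    case False
    have "length s < length w" "w ! length s = a" "drop (length s) w = a # r1"
      using w by simp_all
    then have "pair_subword b (a # r1) = [] \<or> hd (pair_subword b (a # r1)) = Suc b"
      using assms(1) \<open>b < a\<close> False unfolding lex_minimal_form_def
      by (metis Suc_lessI add_2_eq_Suc' less_eq_Suc_le)
    moreover have "pair_subword b (a # r1) = b # pair_subword b r2"
      using suffix[of b] by (simp add: pair_subword_def)
    ultimately show False
      by simp
  qed
qed

lemma runs_word_monomial:
  assumes "valid_pairs 0 0 (Suc n) S"
  shows "nTL_monomial TYPE('k::field) n (runs_word S)"
proof -
  have sorted: "sorted_wrt pair_less S" and bounds: "\<forall>p\<in>set S. snd p + 2 \<le> fst p \<and> fst p \<le> Suc n"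
    using assms by (auto simp: valid_pairs_def)
  have "is_word n (runs_word S)"
    unfolding is_word_def using set_runs_word bounds by fastforce
  moreover have "\<not> reducible TYPE('k) n (runs_word S)"
    using sorted bounds by (intro alternating_not_reducible alternating_runs_word) auto
  moreover have "w' = runs_word S \<or> lex_less (runs_word S) w'" if "word_equiv (runs_word S) w'" for w'
    using sorted bounds that word_equiv_pair_subword[OF that] word_equiv_set_length[OF that]
    by (intro lex_minimal_form_least lex_minimal_form_runs_word) auto
  ultimately show ?thesis
    by (simp add: nTL_monomial_def)
qed

section \<open>Every nTL-monomial is the word of a valid pair list\<close>

lemma in_nTL_ideal_add: "in_nTL_ideal n g \<Longrightarrow> in_nTL_ideal n f \<Longrightarrow> in_nTL_ideal n (f + g)"
proof (induction rule: in_nTL_ideal.induct)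
  case (mono g m u v c)
  then have "in_nTL_ideal n ((f + g) + Poly_Mapping.single (u @ m @ v) c)"
    by (intro in_nTL_ideal.mono) auto
  then show ?case
    by (simp add: add.assoc)
next
  case (comm g a b u v c)
  then have "in_nTL_ideal n ((f + g) + (Poly_Mapping.single (u @ a @ v) c - Poly_Mapping.single (u @ b @ v) c))"
    by (intro in_nTL_ideal.comm) auto
  then show ?case
    by (simp add: add.assoc)
qed simp

lemma in_nTL_ideal_swap_step:
  assumes "is_word n x" "swap_step x y"
  shows "in_nTL_ideal n (Poly_Mapping.single x (c::'k::field) - Poly_Mapping.single y c)"
proof -
  from assms(2) obtain u v i j where ij: "i + 1 < j \<or> j + 1 < i"
    and x: "x = u @ [i, j] @ v" and y: "y = u @ [j, i] @ v"
    unfolding swap_step_def by blast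
  have "comm_rel n [i, j] [j, i]"
    using assms(1) ij x unfolding comm_rel_def is_word_def by auto
  moreover have "is_word n u" "is_word n v"
    using assms(1) x unfolding is_word_def by auto
  ultimately show ?thesis
    using in_nTL_ideal.comm[OF in_nTL_ideal.zero, of n "[i, j]" "[j, i]" u v c] x y by simp
qed

lemma in_nTL_ideal_word_equiv:
  assumes "word_equiv x y" "is_word n x"
  shows "in_nTL_ideal n (Poly_Mapping.single x (c::'k::field) - Poly_Mapping.single y c)"
  using assms(1) unfolding word_equiv_def
proof (induction rule: rtranclp_induct)
  case (step y z)
  have "is_word n y"
    using assms(2) word_equiv_set_length[of x y] step.hyps(1) by (simp add: is_word_def word_equiv_def)
  from in_nTL_ideal_add[OF in_nTL_ideal_swap_step[OF this step.hyps(2), of c] step.IH]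
  show ?case
    by (simp add: algebra_simps)
qed (simp add: in_nTL_ideal.zero)

lemma reducible_if_word_equiv_zero_rel:
  assumes "is_word n w" "word_equiv w (u @ m @ v)" "zero_rel n m"
  shows "reducible TYPE('k::field) n w"
proof -
  have "is_word n u" "is_word n v"
    using assms(1) word_equiv_set_length[OF assms(2)] by (auto simp: is_word_def)
  from in_nTL_ideal.mono[OF in_nTL_ideal.zero assms(3) this, of "1::'k"]
  have "in_nTL_ideal n (Poly_Mapping.single (u @ m @ v) (1::'k))"
    by simp
  from in_nTL_ideal_add[OF this in_nTL_ideal_word_equiv[OF assms(2,1), of 1]]
  show ?thesis
    by (simp add: reducible_def)
qed

lemma monomial_adjacent_letters:
  assumes "nTL_monomial TYPE('k::field) n w" "w = s @ [x, y] @ t"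
  shows "y + 1 = x \<or> x < y"
proof -
  have word: "is_word n w" and irreducible: "\<not> reducible TYPE('k) n w"
    and least: "\<And>w'. word_equiv w w' \<Longrightarrow> w' = w \<or> lex_less w w'"
    using assms(1) by (auto simp: nTL_monomial_def)
  have "x \<noteq> y"
  proof
    assume "x = y"
    have "word_equiv w (s @ [x, y] @ t)"
      using assms(2) by (simp add: word_equiv_def)
    moreover have "x \<in> set w"
      using assms(2) by simp
    with \<open>x = y\<close> have "zero_rel n [x, y]"
      using word unfolding zero_rel_def is_word_def by auto
    ultimately have "reducible TYPE('k) n w"
      by (rule reducible_if_word_equiv_zero_rel[OF word])
    with irreducible show False
      by simp
  qed
  moreover have "\<not> y + 2 \<le> x"
  proof
    assume "y + 2 \<le> x"
    then have "swap_step w (s @ [y, x] @ t)"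
      unfolding swap_step_def using assms(2) by (intro exI[of _ s] exI[of _ t] exI[of _ x] exI[of _ y]) simp
    then have "word_equiv w (s @ [y, x] @ t)"
      by (simp add: word_equiv_def)
    moreover have "s @ [y, x] @ t \<noteq> w"
      using \<open>y + 2 \<le> x\<close> assms(2) by simp
    ultimately have "lex_less w (s @ [y, x] @ t)"
      using least by blast
    then show False
      using \<open>y + 2 \<le> x\<close> assms(2) by (simp add: lex_less_def lexord_same_pref_iff)
  qed
  ultimately show ?thesis
    by linarith
qed

lemma successivelyI: "(\<And>xs a b ys. l = xs @ a # b # ys \<Longrightarrow> P a b) \<Longrightarrow> successively P l"
proof (induction l rule: induct_list012)
  case (3 x y zs)
  have "successively P (y # zs)"
  proof (rule "3.IH"(2))
    fix xs a b ys
    assume "y # zs = xs @ a # b # ys"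
    then show "P a b"
      using "3.prems"[of "x # xs"] by simp
  qed
  then show ?case
    using "3.prems"[of "[]" x y zs] by simp
qed simp_all

text \<open>Consecutive runs of a separated pair list cannot be merged into one decreasing run.\<close>

definition separated_runs :: "(nat \<times> nat) list \<Rightarrow> bool" where
  "separated_runs S \<longleftrightarrow> (\<forall>p\<in>set S. snd p + 2 \<le> fst p) \<and> successively (\<lambda>p q. snd p + 2 < fst q) S"

lemma separated_runs_if_valid_pairs:
  assumes "valid_pairs u d N S"
  shows "separated_runs S"
proof -
  have proper: "\<forall>p\<in>set S. snd p + 2 \<le> fst p"
    using assms by (simp add: valid_pairs_def)
  have "successively pair_less S"
    using assms by (simp add: valid_pairs_def successively_if_sorted_wrt)
  then have "successively (\<lambda>p q. snd p + 2 < fst q) S"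
    by (rule successively_mono) (use proper in \<open>fastforce simp: pair_less_def\<close>)
  with proper show ?thesis
    by (simp add: separated_runs_def)
qed

lemma decreasing_runs_runs_word:
  assumes "separated_runs S"
  shows "decreasing_runs (runs_word S) (map run S)"
proof -
  have proper: "\<forall>p\<in>set S. snd p + 2 \<le> fst p"
    and separated: "successively (\<lambda>p q. snd p + 2 < fst q) S"
    using assms by (auto simp: separated_runs_def)
  have "\<forall>r\<in>set (map run S). r \<noteq> [] \<and> sorted_wrt (>) r"
    using proper by (auto simp: run_def sorted_wrt_rev)
  moreover have "\<not> last (map run S ! i) > hd (map run S ! Suc i)" if "Suc i < length (map run S)" for i
  proof -
    have i: "Suc i < length S"
      using that by simp
    then have "snd (S ! i) + 2 < fst (S ! Suc i)"
      using separated successively_nth by blast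
    moreover have "snd (S ! i) + 2 \<le> fst (S ! i)" "snd (S ! Suc i) + 2 \<le> fst (S ! Suc i)"
      using proper i by simp_all
    then have "last (run (S ! i)) = Suc (snd (S ! i))" "hd (run (S ! Suc i)) = fst (S ! Suc i) - 1"
      by (simp_all add: run_def last_rev hd_rev)
    ultimately show ?thesis
      using i by simp
  qed
  ultimately show ?thesis
    unfolding decreasing_runs_def by (simp add: runs_word_def)
qed

fun split_runs :: "nat list \<Rightarrow> (nat \<times> nat) list" where
  "split_runs [] = []"
| "split_runs (x # w) = (case split_runs w of
      [] \<Rightarrow> [(Suc x, x - 1)]
    | q # S \<Rightarrow> if fst q = x then (Suc x, snd q) # S else (Suc x, x - 1) # q # S)"

lemma run_Suc: "D < U \<Longrightarrow> run (Suc U, D) = U # run (U, D)"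
  by (simp add: run_def)

lemma split_runs_props:
  assumes "\<forall>x\<in>set w. 1 \<le> x" "successively (\<lambda>x y. y + 1 = x \<or> x < y) w"
  shows "runs_word (split_runs w) = w \<and> separated_runs (split_runs w)
    \<and> (w \<noteq> [] \<longrightarrow> split_runs w \<noteq> [] \<and> fst (hd (split_runs w)) = Suc (hd w))"
  using assms
proof (induction w)
  case (Cons x w)
  have "1 \<le> x"
    using Cons.prems by simp
  have IH: "runs_word (split_runs w) = w \<and> separated_runs (split_runs w)
    \<and> (w \<noteq> [] \<longrightarrow> split_runs w \<noteq> [] \<and> fst (hd (split_runs w)) = Suc (hd w))"
    using Cons by (auto simp: successively_Cons)
  show ?case
  proof (cases w)
    case Nil
    then show ?thesis
      using \<open>1 \<le> x\<close> by (simp add: run_def separated_runs_def)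
  next
    case (Cons y w')
    with IH obtain q S where split: "split_runs w = q # S" and "fst q = Suc y"
      by (cases "split_runs w") auto
    have "y + 1 = x \<or> x < y"
      using Cons.prems Cons by simp
    then show ?thesis
    proof
      assume "y + 1 = x"
      then have "fst q = x" "snd q < x"
        using IH split \<open>fst q = Suc y\<close> by (auto simp: separated_runs_def)
      then have "split_runs (x # w) = (Suc x, snd q) # S" "run (Suc x, snd q) = x # run q"
        using split run_Suc[of "snd q" x] by (cases q; simp)+
      then show ?thesis
        using IH split \<open>fst q = x\<close> by (cases S) (auto simp: separated_runs_def)
    next
      assume "x < y"
      then have "split_runs (x # w) = (Suc x, x - 1) # q # S" "run (Suc x, x - 1) = [x]"
        using split \<open>fst q = Suc y\<close> \<open>1 \<le> x\<close> by (simp_all add: run_def)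
      then show ?thesis
        using IH split \<open>fst q = Suc y\<close> \<open>x < y\<close> \<open>1 \<le> x\<close> by (simp add: separated_runs_def)
    qed
  qed
qed (simp add: separated_runs_def)

lemma split_runs_run:
  "split_runs R = S \<Longrightarrow> S = [] \<or> D + 2 < fst (hd S) \<Longrightarrow>
     split_runs (run (D + 2 + k, D) @ R) = (D + 2 + k, D) # S"
proof (induction k)
  case 0
  have "run (D + 2, D) = [Suc D]"
    by (simp add: run_def)
  then show ?case
    using 0 by (cases S) auto
next
  case (Suc k)
  then show ?case
    using run_Suc[of D "D + 2 + k"] by simp
qed

lemma split_runs_runs_word: "separated_runs S \<Longrightarrow> split_runs (runs_word S) = S"
proof (induction S)
  case (Cons p S)
  obtain U D where p: "p = (U, D)"
    by fastforce
  define k where "k = U - (D + 2)"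
  from Cons.prems p have U: "U = D + 2 + k" and next_run: "S = [] \<or> D + 2 < fst (hd S)"
    by (auto simp: separated_runs_def successively_Cons k_def)
  have "split_runs (runs_word S) = S"
    using Cons by (auto simp: separated_runs_def successively_Cons)
  from split_runs_run[OF this next_run] show ?case
    unfolding p U by simp
qed simp

lemma word_equiv_move_left:
  assumes "\<forall>z\<in>set zs. z + 1 < c \<or> c + 1 < z"
  shows "word_equiv (u @ zs @ [c] @ v) (u @ [c] @ zs @ v)"
  using assms unfolding word_equiv_def
proof (induction zs arbitrary: u)
  case (Cons z zs)
  have "swap_step\<^sup>*\<^sup>* ((u @ [z]) @ zs @ [c] @ v) ((u @ [z]) @ [c] @ zs @ v)"
    using Cons.IH[of "u @ [z]"] Cons.prems by simp
  moreover have "z + 1 < c \<or> c + 1 < z"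
    using Cons.prems by simp
  then have "swap_step (u @ [z, c] @ (zs @ v)) (u @ [c, z] @ (zs @ v))"
    unfolding swap_step_def by blast
  ultimately show ?case
    by simp
qed simp

lemma rev_upt_split: "a \<le> c \<Longrightarrow> c < b \<Longrightarrow> rev [a..<b] = rev [Suc c..<b] @ c # rev [a..<c]"
proof -
  assume "a \<le> c" "c < b"
  then have "[a..<b] = [a..<c] @ c # [Suc c..<b]"
    by (metis le_add_diff_inverse less_imp_le_nat upt_add_eq_append upt_conv_Cons)
  then show ?thesis
    by simp
qed

text \<open>If the second run reached as high as the first, its top letter c could be commuted left
  next to the letters c, c - 1 of the first run, creating the zero relation x_c x_(c-1) x_c.\<close>

lemma monomial_run_tops_increase:
  assumes "nTL_monomial TYPE('k::field) n w" "w = P @ run (U1, D1) @ run (U2, D2) @ Q"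
    and "D1 + 2 \<le> U1" "D2 + 2 \<le> U2" "D1 + 2 < U2"
  shows "U1 < U2"
proof (rule ccontr)
  assume "\<not> U1 < U2"
  define c where "c = U2 - 1"
  have c: "Suc D1 \<le> c - 1" "c < U1" "U2 = Suc c" "Suc D2 \<le> c"
    using assms(3-5) \<open>\<not> U1 < U2\<close> by (auto simp: c_def)
  define A zs B where "A = P @ rev [Suc c..<U1] @ [c, c - 1]"
    and "zs = rev [Suc D1..<c - 1]" and "B = rev [Suc D2..<c] @ Q"
  have "run (U1, D1) = rev [Suc c..<U1] @ [c, c - 1] @ zs"
    using rev_upt_split[of "Suc D1" c U1] rev_upt_split[of "Suc D1" "c - 1" c] c
    by (simp add: run_def zs_def)
  moreover have "run (U2, D2) = c # rev [Suc D2..<c]"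
    using c by (simp add: run_def)
  ultimately have w: "w = A @ zs @ [c] @ B"
    using assms(2) by (simp add: A_def zs_def B_def)
  moreover have "word_equiv (A @ zs @ [c] @ B) (A @ [c] @ zs @ B)"
    by (rule word_equiv_move_left) (auto simp: zs_def)
  moreover have "A @ [c] @ zs @ B = (P @ rev [Suc c..<U1]) @ [Suc (c - 1), c - 1, Suc (c - 1)] @ (zs @ B)"
    using c by (simp add: A_def zs_def B_def)
  moreover have word: "is_word n w"
    using assms(1) by (simp add: nTL_monomial_def)
  moreover have "c - 1 \<in> set w" "c \<in> set w"
    using w by (simp_all add: A_def)
  with word c have "1 \<le> c - 1" "c - 1 < n"
    by (auto simp: is_word_def)
  then have "zero_rel n [Suc (c - 1), c - 1, Suc (c - 1)]"
    unfolding zero_rel_def by blast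
  ultimately have "reducible TYPE('k) n w"
    using reducible_if_word_equiv_zero_rel[OF word] by metis
  then show False
    using assms(1) by (simp add: nTL_monomial_def)
qed

text \<open>Symmetrically, the bottom letter c of the first run could be commuted right next to the
  letters c + 1, c of the second run.\<close>

lemma monomial_run_bottoms_increase:
  assumes "nTL_monomial TYPE('k::field) n w" "w = P @ run (U1, D1) @ run (U2, D2) @ Q"
    and "D1 + 2 \<le> U1" "D1 + 2 < U2"
  shows "D1 < D2"
proof (rule ccontr)
  assume "\<not> D1 < D2"
  define c where "c = Suc D1"
  have c: "Suc D2 \<le> c" "c < U1" "Suc c < U2"
    using assms(3,4) \<open>\<not> D1 < D2\<close> by (auto simp: c_def)
  define A zs B where "A = P @ rev [Suc c..<U1]"
    and "zs = rev [Suc (Suc c)..<U2]" and "B = [Suc c, c] @ rev [Suc D2..<c] @ Q"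
  have "run (U1, D1) = rev [Suc c..<U1] @ [c]"
    using rev_upt_split[of c c U1] c by (simp add: run_def c_def)
  moreover have "run (U2, D2) = zs @ [Suc c, c] @ rev [Suc D2..<c]"
    using rev_upt_split[of "Suc D2" "Suc c" U2] rev_upt_split[of "Suc D2" c "Suc c"] c
    by (simp add: run_def zs_def)
  ultimately have w: "w = A @ [c] @ zs @ B"
    using assms(2) by (simp add: A_def zs_def B_def)
  moreover have "word_equiv (A @ zs @ [c] @ B) (A @ [c] @ zs @ B)"
    by (rule word_equiv_move_left) (auto simp: zs_def)
  moreover have "A @ zs @ [c] @ B = (A @ zs) @ [c, Suc c, c] @ (rev [Suc D2..<c] @ Q)"
    by (simp add: B_def)
  moreover have word: "is_word n w"
    using assms(1) by (simp add: nTL_monomial_def)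
  moreover have "c \<in> set w" "Suc c \<in> set w"
    using w by (simp_all add: B_def)
  with word have "1 \<le> c" "c < n"
    by (auto simp: is_word_def)
  then have "zero_rel n [c, Suc c, c]"
    unfolding zero_rel_def by blast
  ultimately have "reducible TYPE('k) n w"
    using reducible_if_word_equiv_zero_rel[OF word] word_equiv_sym by metis
  then show False
    using assms(1) by (simp add: nTL_monomial_def)
qed

lemma monomial_split_runs:
  assumes "nTL_monomial TYPE('k::field) n w"
  shows "valid_pairs 0 0 (Suc n) (split_runs w) \<and> runs_word (split_runs w) = w"
proof -
  define S where "S = split_runs w"
  have word: "is_word n w"
    using assms by (simp add: nTL_monomial_def)
  have "\<forall>x\<in>set w. 1 \<le> x"
    using word by (auto simp: is_word_def)
  moreover have "successively (\<lambda>x y. y + 1 = x \<or> x < y) w"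
    by (rule successivelyI) (rule monomial_adjacent_letters[OF assms], simp)
  ultimately have w: "runs_word S = w" and separated: "separated_runs S"
    using split_runs_props[of w] by (simp_all add: S_def)
  have "successively pair_less S"
  proof (rule successivelyI)
    fix xs p q ys
    assume S: "S = xs @ p # q # ys"
    then have "w = runs_word xs @ run (fst p, snd p) @ run (fst q, snd q) @ runs_word ys"
      using w by simp
    moreover have "snd p + 2 \<le> fst p" "snd q + 2 \<le> fst q" "snd p + 2 < fst q"
      using separated S by (auto simp: separated_runs_def successively_append_iff)
    ultimately show "pair_less p q"
      unfolding pair_less_def
      using monomial_run_tops_increase[OF assms] monomial_run_bottoms_increase[OF assms] by blast
  qed
  then have "sorted_wrt pair_less S"
    using successively_conv_sorted_wrt[OF transp_pair_less] by simp
  moreover have "fst p \<le> Suc n" if "p \<in> set S" for p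
  proof -
    have "fst p - 1 \<in> set (run p)"
      using separated that by (auto simp: run_def separated_runs_def)
    moreover have "set (run p) \<subseteq> set w"
      using that w by (auto simp: runs_word_def)
    ultimately have "fst p - 1 \<le> n"
      using word by (auto simp: is_word_def)
    then show ?thesis
      by simp
  qed
  ultimately show ?thesis
    using separated w by (auto simp: valid_pairs_def separated_runs_def S_def)
qed

lemma bij_betw_runs_word:
  "bij_betw runs_word {S. valid_pairs 0 0 (Suc n) S} {w. nTL_monomial TYPE('k::field) n w}"
  unfolding bij_betw_def
proof (intro conjI subset_antisym)
  show "inj_on runs_word {S. valid_pairs 0 0 (Suc n) S}"
    by (rule inj_on_inverseI[of _ split_runs]) (auto intro: split_runs_runs_word separated_runs_if_valid_pairs)
  show "runs_word ` {S. valid_pairs 0 0 (Suc n) S} \<subseteq> {w. nTL_monomial TYPE('k) n w}"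
    using runs_word_monomial by blast
  show "{w. nTL_monomial TYPE('k) n w} \<subseteq> runs_word ` {S. valid_pairs 0 0 (Suc n) S}"
  proof
    fix w
    assume "w \<in> {w. nTL_monomial TYPE('k) n w}"
    then have "valid_pairs 0 0 (Suc n) (split_runs w) \<and> runs_word (split_runs w) = w"
      using monomial_split_runs by blast
    then show "w \<in> runs_word ` {S. valid_pairs 0 0 (Suc n) S}"
      by (metis image_eqI mem_Collect_eq)
  qed
qed

theorem theorem4p1:
  fixes n :: nat
  shows "bij_betw Phi {D. dyck_path (n + 1) D} {w. nTL_monomial TYPE('k::field) n w}
         \<and> (\<forall>D. dyck_path (n + 1) D \<longrightarrow> decreasing_runs (Phi D) (Phi_runs D))"
proof (intro conjI allI impI)
  have "Phi = runs_word \<circ> high_peak_pairs 0 0"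
    by (simp add: fun_eq_iff Phi_eq)
  then show "bij_betw Phi {D. dyck_path (n + 1) D} {w. nTL_monomial TYPE('k) n w}"
    using bij_betw_trans[OF bij_betw_high_peak_pairs bij_betw_runs_word] by simp
next
  fix D
  assume "dyck_path (n + 1) D"
  then have "separated_runs (high_peak_pairs 0 0 D)"
    by (rule separated_runs_if_valid_pairs[OF valid_pairs_high_peak_pairs])
  then show "decreasing_runs (Phi D) (Phi_runs D)"
    unfolding Phi_eq Phi_runs_eq by (rule decreasing_runs_runs_word)
qed

end
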